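(* Let $I\subseteq\mathbb{R}$ be an interval, $p\in I$, and let $f: I\to\mathbb{R}$ be a continuous star-convex function with center $p$. Then: (i) if $f|_{]-\infty,p]\cap I}$ and $f|_{[p,\infty[\cap I}$ are both convex, then $epi(f)$ is a star-convex set; (ii) if $f|_{]-\infty,p]\cap I}$ and $f|_{[p,\infty[\cap I}$ are both concave, then $hypo(f)$ is a star-convex set; (iii) if $f|_{]-\infty,p]\cap I}$ is convex and $f|_{[p,\infty[\cap I}$ is concave, then $\{(x,t): x\in\,]-\infty,p]\cap I,\ f(x)\leq t\}\cup\{(x,t): x\in[p,\infty[\cap I,\ f(x)\geq t\}$ is a star-convex set; (iv) if $f|_{]-\infty,p]\cap I}$ is concave and $f|_{[p,\infty[\cap I}$ is convex, then $\{(x,t): x\in\,]-\infty,p]\cap I,\ f(x)\geq t\}\cup\{(x,t): x\in[p,\infty[\cap I,\ f(x)\leq t\}$ is a star-convex set.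
   Context: $epi(f)=\{(x,t)\in I\times\mathbb{R}: f(x)\leq t\}$ and $hypo(f)=\{(x,t)\in I\times\mathbb{R}: f(x)\geq t\}$. A function $f: I\to\mathbb{R}$ is star-convex with center $p\in I$ if for every $x\in I$, either $f(tx+(1-t)p)\leq tf(x)+(1-t)f(p)$ for all $t\in[0,1]$, or $f(tx+(1-t)p)\geq tf(x)+(1-t)f(p)$ for all $t\in[0,1]$. A set $X\subseteq\mathbb{R}^2$ is star-convex if there exists $x_0\in X$ such that for all $x\in X$ and $t\in[0,1]$, $tx+(1-t)x_0\in X$. *)

theory Defs
  imports "HOL-Analysis.Analysis"
begin

definition epi :: "real set \<Rightarrow> (real \<Rightarrow> real) \<Rightarrow> (real \<times> real) set" where
  "epi I f = {(x,t). x \<in> I \<and> f x \<le> t}"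

definition hypo :: "real set \<Rightarrow> (real \<Rightarrow> real) \<Rightarrow> (real \<times> real) set" where
  "hypo I f = {(x,t). x \<in> I \<and> f x \<ge> t}"

definition star_convex_fun :: "real set \<Rightarrow> (real \<Rightarrow> real) \<Rightarrow> real \<Rightarrow> bool" where
  "star_convex_fun I f p \<longleftrightarrow> p \<in> I \<and> (\<forall>x\<in>I.
     (\<forall>t\<in>{0..1}. f (t * x + (1 - t) * p) \<le> t * f x + (1 - t) * f p) \<or>
     (\<forall>t\<in>{0..1}. f (t * x + (1 - t) * p) \<ge> t * f x + (1 - t) * f p))"

definition star_convex_set :: "(real \<times> real) set \<Rightarrow> bool" where
  "star_convex_set X \<longleftrightarrow> (\<exists>x0\<in>X. \<forall>x\<in>X. \<forall>t\<in>{0..1::real}.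
     t *\<^sub>R x + (1 - t) *\<^sub>R x0 \<in> X)"

end

theory Submission
  imports Defs
begin

text \<open>Each of the four sets is the union of an epigraph or hypograph over
  \<open>{..p} \<inter> I\<close> with one over \<open>{p..} \<inter> I\<close>. Under the respective convexity or
  concavity hypothesis both pieces are convex sets, and both contain \<open>(p, f p)\<close>;
  a union of convex sets sharing a point is star-convex about that point.\<close>

lemma star_convex_set_Un_convex:
  assumes "convex A" "convex B" "a \<in> A" "a \<in> B"
  shows "star_convex_set (A \<union> B)"
  unfolding star_convex_set_def
proof (intro bexI[of _ a] ballI)
  fix x and t :: real
  assume "x \<in> A \<union> B" "t \<in> {0..1}"
  then show "t *\<^sub>R x + (1 - t) *\<^sub>R a \<in> A \<union> B"
    using assms by (auto intro: convexD)
qed (use assms in simp)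

lemma epi_eq_epigraph: "epi S f = epigraph S f"
  by (auto simp: epi_def epigraph_def)

lemma convex_epi: "convex_on S f \<Longrightarrow> convex (epi S f)"
  by (simp add: epi_eq_epigraph convex_epigraphI)

lemma hypo_eq_image_epi_uminus: "hypo S f = (\<lambda>(x, t). (x, - t)) ` epi S (\<lambda>x. - f x)"
proof (intro set_eqI iffI)
  fix z assume "z \<in> hypo S f"
  then obtain x t where "z = (x, - (- t))" "(x, - t) \<in> epi S (\<lambda>x. - f x)"
    by (auto simp: hypo_def epi_def)
  then show "z \<in> (\<lambda>(x, t). (x, - t)) ` epi S (\<lambda>x. - f x)"
    by (auto intro: rev_image_eqI)
qed (auto simp: hypo_def epi_def)

lemma convex_hypo:
  assumes "concave_on S f"
  shows "convex (hypo S f)"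
proof -
  have "linear (\<lambda>(x, t). (x, - t) :: real \<times> real)"
    by (rule linearI) auto
  moreover have "convex (epi S (\<lambda>x. - f x))"
    using assms by (simp add: concave_on_def convex_epi)
  ultimately show ?thesis
    unfolding hypo_eq_image_epi_uminus by (rule convex_linear_image)
qed

lemma epi_Un: "epi (S \<union> T) f = epi S f \<union> epi T f"
  by (auto simp: epi_def)

lemma hypo_Un: "hypo (S \<union> T) f = hypo S f \<union> hypo T f"
  by (auto simp: hypo_def)

lemma graph_point_in_epi_hypo:
  assumes "x \<in> S"
  shows "(x, f x) \<in> epi S f" "(x, f x) \<in> hypo S f"
  using assms by (simp_all add: epi_def hypo_def)

theorem theorem4p2:
  fixes I :: "real set" and p :: real and f :: "real \<Rightarrow> real"
  assumes "is_interval I" and "p \<in> I"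
    and "continuous_on I f"
    and "star_convex_fun I f p"
  shows
    "(convex_on ({..p} \<inter> I) f \<and> convex_on ({p..} \<inter> I) f
        \<longrightarrow> star_convex_set (epi I f))
     \<and> (concave_on ({..p} \<inter> I) f \<and> concave_on ({p..} \<inter> I) f
        \<longrightarrow> star_convex_set (hypo I f))
     \<and> (convex_on ({..p} \<inter> I) f \<and> concave_on ({p..} \<inter> I) f
        \<longrightarrow> star_convex_set ({(x,t). x \<in> {..p} \<inter> I \<and> f x \<le> t}
                               \<union> {(x,t). x \<in> {p..} \<inter> I \<and> f x \<ge> t}))
     \<and> (concave_on ({..p} \<inter> I) f \<and> convex_on ({p..} \<inter> I) f
        \<longrightarrow> star_convex_set ({(x,t). x \<in> {..p} \<inter> I \<and> f x \<ge> t}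
                               \<union> {(x,t). x \<in> {p..} \<inter> I \<and> f x \<le> t}))"
proof -
  define L R where "L = {..p} \<inter> I" and "R = {p..} \<inter> I"
  have "I = L \<union> R"
    unfolding L_def R_def by auto
  then have split: "epi I f = epi L f \<union> epi R f" "hypo I f = hypo L f \<union> hypo R f"
    by (simp_all add: epi_Un hypo_Un)
  have "p \<in> L" "p \<in> R"
    using \<open>p \<in> I\<close> unfolding L_def R_def by auto
  then have "(p, f p) \<in> epi L f" "(p, f p) \<in> hypo L f" "(p, f p) \<in> epi R f" "(p, f p) \<in> hypo R f"
    by (simp_all add: graph_point_in_epi_hypo)
  then show ?thesis
    unfolding L_def[symmetric] R_def[symmetric] epi_def[symmetric] hypo_def[symmetric] split
    by (blast intro: star_convex_set_Un_convex convex_epi convex_hypo)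
qed

end
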